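(* Let $C$ be a smooth affine rational curve over an algebraically closed field $k$ of characteristic zero. Then the bracket width of the simple Lie algebra $\mathrm{Vec}(C)$ is at most two.
   Context: $\mathrm{Vec}(C)=H^0(C,\mathcal{T}_C)$ is the Lie algebra of algebraic vector fields on $C$. The bracket width of a Lie algebra $L$ is the supremum over $a\in[L,L]$ of the smallest number $m$ such that $a$ is a sum of $m$ brackets of elements of $L$. *)

theory Defs
  imports "HOL-Computational_Algebra.Computational_Algebra" "HOL-Library.Extended_Nat"
begin

definition frac_deriv :: "'k::field_char_0 poly fract \<Rightarrow> 'k poly fract" where
  "frac_deriv x = (case (SOME (a, b). b \<noteq> 0 \<and> x = Fract a b) of
                     (a, b) \<Rightarrow> Fract (pderiv a * b - a * pderiv b) (b ^ 2))"

(* Coordinate ring O(C) of the curve C = A^1 minus the finite set A of points: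
   k[t][1/p] with p = prod_{a in A} (t - a), inside k(t). *)
definition coord_ring :: "'k::field_char_0 set \<Rightarrow> 'k poly fract set" where
  "coord_ring A = {x. \<exists>q n. x = Fract q ((\<Prod>a\<in>A. [:-a, 1:]) ^ n)}"

(* Vec(C) = H^0(C, T_C) = O(C) * d/dt; the vector field f d/dt is represented by f.
   Lie bracket [f d/dt, g d/dt] = (f g' - f' g) d/dt. *)
definition vf_bracket :: "'k::field_char_0 poly fract \<Rightarrow> 'k poly fract \<Rightarrow> 'k poly fract" where
  "vf_bracket f g = f * frac_deriv g - frac_deriv f * g"

definition bracket_sum :: "('a \<Rightarrow> 'a \<Rightarrow> 'a::comm_monoid_add) \<Rightarrow> ('a \<times> 'a) list \<Rightarrow> 'a" where
  "bracket_sum br xs = sum_list (map (\<lambda>(u, v). br u v) xs)"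

(* Derived algebra [L,L]: finite sums of brackets (this is the linear span of the
   brackets, since c [u,v] = [c u, v]). *)
definition derived_alg :: "'a set \<Rightarrow> ('a \<Rightarrow> 'a \<Rightarrow> 'a::comm_monoid_add) \<Rightarrow> 'a set" where
  "derived_alg L br = {x. \<exists>xs. set xs \<subseteq> L \<times> L \<and> x = bracket_sum br xs}"

definition bracket_width :: "'a set \<Rightarrow> ('a \<Rightarrow> 'a \<Rightarrow> 'a::comm_monoid_add) \<Rightarrow> enat" where
  "bracket_width L br =
     (SUP a\<in>derived_alg L br.
        enat (LEAST m. \<exists>xs. length xs = m \<and> set xs \<subseteq> L \<times> L \<and> a = bracket_sum br xs))"

end

theory Submission
  imports Defs
begin

text \<open>
  For \<open>f = 1/P\<close> one has \<open>[f \<partial>, g \<partial>] = f\<^sup>2 (g/f)' \<partial>\<close>, so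
  \<open>[P\<^sup>-\<^sup>1 \<partial>, U P\<^sup>-\<^sup>1 \<partial>] = U' P\<^sup>-\<^sup>2 \<partial>\<close>. Given \<open>h = q/P\<close> with \<open>P\<close> a power of
  \<open>p = \<Prod>a\<in>A. (t - a)\<close>, choose a polynomial antiderivative \<open>U\<close> of \<open>q P\<close>: then
  \<open>h \<partial>\<close> is a single bracket of elements of \<open>Vec(C)\<close>. As \<open>Vec(C)\<close> is closed
  under the bracket, every element of the derived algebra is a single bracket, so the bracket
  width is in fact at most one.
\<close>

lemma pderiv_sum: "pderiv (sum f S) = (\<Sum>x\<in>S. pderiv (f x))"
  using higher_pderiv_sum[of 1 f S] by simp

lemma pderiv_surj:
  fixes p :: "'k::field_char_0 poly"
  shows "\<exists>q. pderiv q = p"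
proof -
  have "pderiv (\<Sum>i\<le>degree p. monom (coeff p i / of_nat (Suc i)) (Suc i))
        = (\<Sum>i\<le>degree p. monom (coeff p i) i)"
    by (simp add: pderiv_sum pderiv_monom del: of_nat_Suc)
  also have "\<dots> = p" by (rule poly_as_sum_of_monoms)
  finally show ?thesis by blast
qed

lemma quotient_rule_respects_Fract:
  fixes a b c d :: "'k::field_char_0 poly"
  assumes b: "b \<noteq> 0" and d: "d \<noteq> 0" and eq: "Fract a b = Fract c d"
  shows "Fract (pderiv a * b - a * pderiv b) (b ^ 2) = Fract (pderiv c * d - c * pderiv d) (d ^ 2)"
proof -
  have cross: "a * d = c * b" using eq b d by (simp add: eq_fract)
  have cross': "pderiv a * d + a * pderiv d = pderiv c * b + c * pderiv b"
    using arg_cong[OF cross, of pderiv] by (simp add: pderiv_mult algebra_simps)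
  have "(pderiv c * d - c * pderiv d) * b ^ 2 - (pderiv a * b - a * pderiv b) * d ^ 2
     = b * pderiv d * (a * d - c * b)
       - b * d * (pderiv a * d + a * pderiv d - (pderiv c * b + c * pderiv b))
       + pderiv b * d * (a * d - c * b)"
    by (simp add: algebra_simps power2_eq_square)
  also have "\<dots> = 0" using cross cross' by simp
  finally show ?thesis using b d by (simp add: eq_fract)
qed

lemma frac_deriv_Fract:
  fixes a b :: "'k::field_char_0 poly"
  assumes b: "b \<noteq> 0"
  shows "frac_deriv (Fract a b) = Fract (pderiv a * b - a * pderiv b) (b ^ 2)"
proof -
  let ?rep = "\<lambda>(c, d). d \<noteq> 0 \<and> Fract a b = Fract c d"
  have "?rep (a, b)" using b by simp
  then have "?rep (SOME cd. ?rep cd)" by (rule someI)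
  then obtain c d where cd: "(SOME cd. ?rep cd) = (c, d)"
    and d: "d \<noteq> 0" and eq: "Fract a b = Fract c d"
    by (auto split: prod.splits)
  show ?thesis
    unfolding frac_deriv_def cd using quotient_rule_respects_Fract[OF b d eq] by simp
qed

lemma vf_bracket_inverse_Fract:
  fixes p u :: "'k::field_char_0 poly"
  assumes p: "p \<noteq> 0"
  shows "vf_bracket (Fract 1 p) (Fract u p) = Fract (pderiv u) (p ^ 2)"
proof -
  have "vf_bracket (Fract 1 p) (Fract u p)
     = Fract (pderiv u * p - u * pderiv p) (p * p ^ 2) - Fract (- pderiv p * u) (p ^ 2 * p)"
    unfolding vf_bracket_def using p by (simp add: frac_deriv_Fract)
  also have "\<dots> = Fract (pderiv u * p) (p ^ 3)"
    using p by (simp add: eq_fract algebra_simps power2_eq_square power3_eq_cube)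
  also have "\<dots> = Fract (pderiv u) (p ^ 2)"
    using p by (simp add: eq_fract power2_eq_square power3_eq_cube)
  finally show ?thesis .
qed

definition vanishing_poly :: "'k::field_char_0 set \<Rightarrow> 'k poly" where
  "vanishing_poly A = (\<Prod>a\<in>A. [:-a, 1:])"

lemma vanishing_poly_nonzero: "vanishing_poly A \<noteq> 0"
  unfolding vanishing_poly_def by (cases "finite A") (auto simp: prod_zero_iff)

lemma coord_ring_iff: "x \<in> coord_ring A \<longleftrightarrow> (\<exists>q n. x = Fract q (vanishing_poly A ^ n))"
  unfolding coord_ring_def vanishing_poly_def by simp

lemma Fract_in_coord_ring: "Fract q (vanishing_poly A ^ n) \<in> coord_ring A"
  unfolding coord_ring_iff by blast

lemma zero_in_coord_ring: "0 \<in> coord_ring A"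
  using Fract_in_coord_ring[of 0 A 0] by (simp add: Zero_fract_def[symmetric])

lemma add_in_coord_ring:
  assumes "x \<in> coord_ring A" "y \<in> coord_ring A"
  shows "x + y \<in> coord_ring A"
proof -
  obtain q n r m where "x = Fract q (vanishing_poly A ^ n)" "y = Fract r (vanishing_poly A ^ m)"
    using assms by (auto simp: coord_ring_iff)
  then have "x + y = Fract (q * vanishing_poly A ^ m + r * vanishing_poly A ^ n)
                           (vanishing_poly A ^ (n + m))"
    using vanishing_poly_nonzero[of A] by (simp add: power_add)
  then show ?thesis using Fract_in_coord_ring by simp
qed

lemma diff_in_coord_ring:
  assumes "x \<in> coord_ring A" "y \<in> coord_ring A"
  shows "x - y \<in> coord_ring A"
proof -
  obtain r m where "y = Fract r (vanishing_poly A ^ m)"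
    using assms by (auto simp: coord_ring_iff)
  then have "- y = Fract (- r) (vanishing_poly A ^ m)" by simp
  then have "- y \<in> coord_ring A" by (simp only: Fract_in_coord_ring)
  from add_in_coord_ring[OF assms(1) this] show ?thesis by simp
qed

lemma mult_in_coord_ring:
  assumes "x \<in> coord_ring A" "y \<in> coord_ring A"
  shows "x * y \<in> coord_ring A"
proof -
  obtain q n r m where "x = Fract q (vanishing_poly A ^ n)" "y = Fract r (vanishing_poly A ^ m)"
    using assms by (auto simp: coord_ring_iff)
  then have "x * y = Fract (q * r) (vanishing_poly A ^ (n + m))"
    by (simp add: power_add)
  then show ?thesis using Fract_in_coord_ring by simp
qed

lemma frac_deriv_in_coord_ring:
  assumes "x \<in> coord_ring A"
  shows "frac_deriv x \<in> coord_ring A"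
proof -
  obtain q n where "x = Fract q (vanishing_poly A ^ n)"
    using assms by (auto simp: coord_ring_iff)
  then have "frac_deriv x =
      Fract (pderiv q * vanishing_poly A ^ n - q * pderiv (vanishing_poly A ^ n))
            (vanishing_poly A ^ (n * 2))"
    using vanishing_poly_nonzero[of A] by (simp add: frac_deriv_Fract power_mult)
  then show ?thesis using Fract_in_coord_ring by simp
qed

lemma vf_bracket_in_coord_ring:
  assumes "x \<in> coord_ring A" "y \<in> coord_ring A"
  shows "vf_bracket x y \<in> coord_ring A"
  unfolding vf_bracket_def
  using assms by (intro diff_in_coord_ring mult_in_coord_ring frac_deriv_in_coord_ring)

lemma derived_alg_coord_ring_subset: "derived_alg (coord_ring A) vf_bracket \<subseteq> coord_ring A"
proof -
  have "bracket_sum vf_bracket xs \<in> coord_ring A"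
    if "set xs \<subseteq> coord_ring A \<times> coord_ring A" for xs
    using that
    by (induction xs)
      (auto simp: bracket_sum_def zero_in_coord_ring intro!: add_in_coord_ring vf_bracket_in_coord_ring)
  then show ?thesis unfolding derived_alg_def by blast
qed

lemma coord_ring_elem_is_vf_bracket:
  assumes "h \<in> coord_ring A"
  shows "\<exists>f\<in>coord_ring A. \<exists>g\<in>coord_ring A. h = vf_bracket f g"
proof -
  obtain q n where h: "h = Fract q (vanishing_poly A ^ n)"
    using assms by (auto simp: coord_ring_iff)
  define p where "p = vanishing_poly A ^ n"
  have p: "p \<noteq> 0" unfolding p_def using vanishing_poly_nonzero[of A] by simp
  obtain u where u: "pderiv u = q * p" using pderiv_surj by blast
  have "vf_bracket (Fract 1 p) (Fract u p) = h"
    unfolding vf_bracket_inverse_Fract[OF p] u h p_def[symmetric]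
    using p by (simp add: eq_fract power2_eq_square)
  moreover have "Fract 1 p \<in> coord_ring A" "Fract u p \<in> coord_ring A"
    unfolding p_def by (rule Fract_in_coord_ring)+
  ultimately show ?thesis by metis
qed

lemma bracket_width_le:
  assumes "\<And>a. a \<in> derived_alg L br \<Longrightarrow>
             \<exists>xs. length xs \<le> n \<and> set xs \<subseteq> L \<times> L \<and> a = bracket_sum br xs"
  shows "bracket_width L br \<le> enat n"
  unfolding bracket_width_def
proof (rule SUP_least)
  fix a assume "a \<in> derived_alg L br"
  then obtain xs where xs: "length xs \<le> n" "set xs \<subseteq> L \<times> L" "a = bracket_sum br xs"
    using assms by blast
  let ?width = "\<lambda>m. \<exists>xs. length xs = m \<and> set xs \<subseteq> L \<times> L \<and> a = bracket_sum br xs"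
  have "Least ?width \<le> length xs"
    by (rule Least_le) (use xs in blast)
  with xs show "enat (Least ?width) \<le> enat n" by simp
qed

lemma bracket_width_le_one:
  assumes "\<And>a. a \<in> derived_alg L br \<Longrightarrow> \<exists>u\<in>L. \<exists>v\<in>L. a = br u v"
  shows "bracket_width L br \<le> 1"
proof -
  have "bracket_width L br \<le> enat 1"
  proof (rule bracket_width_le)
    fix a assume "a \<in> derived_alg L br"
    then obtain u v where "u \<in> L" "v \<in> L" "a = br u v" using assms by blast
    then show "\<exists>xs. length xs \<le> 1 \<and> set xs \<subseteq> L \<times> L \<and> a = bracket_sum br xs"
      by (intro exI[of _ "[(u, v)]"]) (simp add: bracket_sum_def)
  qed
  then show ?thesis by (simp add: one_enat_def)
qed

theorem proposition3p1:
  fixes A :: "'k::{alg_closed_field, field_char_0} set"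
  assumes "finite A"
  shows "bracket_width (coord_ring A) vf_bracket \<le> 2"
proof -
  have "bracket_width (coord_ring A) vf_bracket \<le> 1"
    using derived_alg_coord_ring_subset coord_ring_elem_is_vf_bracket
    by (intro bracket_width_le_one) blast
  also have "(1::enat) \<le> 2" by (simp add: one_enat_def numeral_eq_enat)
  finally show ?thesis .
qed

end
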